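(* Let $X$ be a topological space whose frame of open sets has a presentation $\mathcal{O}X=\langle G\mid R\rangle$, with quotient frame homomorphism $\overline{q}\colon\mathcal{O}(\Sigma^G)\to\mathcal{O}X$, and give $\mathcal{O}(\Sigma^G)$ and $\mathcal{O}X$ their Scott topologies. If $\overline{q}\times\mathrm{id}_X\colon\mathcal{O}(\Sigma^G)\times X\to\mathcal{O}X\times X$ is a quotient map of topological spaces, then $\mathcal{O}X$ with the Scott topology, together with the evaluation map $\mathrm{ev}\colon\mathcal{O}X\times X\to\Sigma$, $\mathrm{ev}(U,x)=\top\iff x\in U$, is the exponential $\Sigma^X$ in $\mathrm{Top}$.
   Context: $\Sigma$ is Sierpiński space $\{\bot,\top\}$ with $\{\top\}$ open. For a set $G$, $\mathcal{O}(\Sigma^G)$ denotes the free frame on $G$ (frames: complete lattices with finite meets distributing over arbitrary joins). A presentation $\mathcal{O}X=\langle G\mid R\rangle$ means the frame of opens of $X$ is the quotient of the free frame on $G$ by the congruence generated by $R$, with quotient homomorphism $\overline{q}$. Scott topology on a poset with directed joins: $V$ is open iff it is an upset and whenever the join of a directed set lies in $V$ some member of that set lies in $V$. One has a continuous map $\widetilde{\mathrm{ev}}\colon\mathcal{O}(\Sigma^G)\times X\to\Sigma$, $\widetilde{\mathrm{ev}}(m,x)=\top$ iff $x\in\overline{q}(m)$, which has the weak universal property: every continuous $h\colon A\times X\to\Sigma$ factors (not necessarily uniquely) as $\widetilde{\mathrm{ev}}\circ(h'\times X)$. *)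

theory Defs
  imports "HOL-Analysis.Analysis"
begin

lemma istopology_sierpinski: "istopology (\<lambda>U::bool set. U \<in> {{}, {True}, UNIV})"
  unfolding istopology_def
proof (intro conjI allI impI)
  fix S T :: "bool set"
  assume "S \<in> {{}, {True}, UNIV}" "T \<in> {{}, {True}, UNIV}"
  then show "S \<inter> T \<in> {{}, {True}, UNIV}" by auto
next
  fix K :: "bool set set"
  assume K: "\<forall>S\<in>K. S \<in> {{}, {True}, UNIV}"
  show "\<Union>K \<in> {{}, {True}, UNIV}"
  proof (cases "UNIV \<in> K")
    case True then show ?thesis by auto
  next
    case False
    then have "K \<subseteq> {{}, {True}}" using K by auto
    then have "\<Union>K = {} \<or> \<Union>K = {True}" by blast
    then show ?thesis by auto
  qed
qed

definition sierpinski_space :: "bool topology" where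
  "sierpinski_space = topology (\<lambda>U. U \<in> {{}, {True}, UNIV})"

text \<open>The frame of opens of a space, ordered by inclusion (meets of finitely many
  elements are intersections, arbitrary joins are unions).\<close>
definition opens :: "'a topology \<Rightarrow> 'a set set" where
  "opens X = {U. openin X U}"

text \<open>The free frame on G, realised as the frame of opens of the product space Sigma^G.\<close>
definition free_frame :: "'g set \<Rightarrow> ('g \<Rightarrow> bool) set set" where
  "free_frame G = opens (product_topology (\<lambda>_. sierpinski_space) G)"

definition frame_hom :: "'a topology \<Rightarrow> 'b topology \<Rightarrow> ('a set \<Rightarrow> 'b set) \<Rightarrow> bool" where
  "frame_hom X Y f \<longleftrightarrow>
     (\<forall>U\<in>opens X. f U \<in> opens Y) \<and>
     f (topspace X) = topspace Y \<and>
     (\<forall>U\<in>opens X. \<forall>V\<in>opens X. f (U \<inter> V) = f U \<inter> f V) \<and>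
     (\<forall>S. S \<subseteq> opens X \<longrightarrow> f (\<Union>S) = \<Union>(f ` S))"

definition frame_congruence :: "'a topology \<Rightarrow> ('a set \<times> 'a set) set \<Rightarrow> bool" where
  "frame_congruence X \<theta> \<longleftrightarrow>
     equiv (opens X) \<theta> \<and>
     (\<forall>a b c d. (a, b) \<in> \<theta> \<longrightarrow> (c, d) \<in> \<theta> \<longrightarrow> (a \<inter> c, b \<inter> d) \<in> \<theta>) \<and>
     (\<forall>S. S \<subseteq> \<theta> \<longrightarrow> (\<Union>(fst ` S), \<Union>(snd ` S)) \<in> \<theta>)"

definition frame_congruence_generated ::
  "'a topology \<Rightarrow> ('a set \<times> 'a set) set \<Rightarrow> ('a set \<times> 'a set) set" where
  "frame_congruence_generated X R = \<Inter>{\<theta>. frame_congruence X \<theta> \<and> R \<subseteq> \<theta>}"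

definition is_presentation ::
  "'x topology \<Rightarrow> 'g set \<Rightarrow> (('g \<Rightarrow> bool) set \<times> ('g \<Rightarrow> bool) set) set
     \<Rightarrow> (('g \<Rightarrow> bool) set \<Rightarrow> 'x set) \<Rightarrow> bool" where
  "is_presentation X G R q \<longleftrightarrow>
     (let SG = product_topology (\<lambda>_. sierpinski_space) G in
       R \<subseteq> free_frame G \<times> free_frame G \<and>
       frame_hom SG X q \<and>
       q ` free_frame G = opens X \<and>
       (\<forall>a\<in>free_frame G. \<forall>b\<in>free_frame G.
          q a = q b \<longleftrightarrow> (a, b) \<in> frame_congruence_generated SG R))"

definition directed_set :: "'a set set \<Rightarrow> bool" where
  "directed_set D \<longleftrightarrow> D \<noteq> {} \<and> (\<forall>a\<in>D. \<forall>b\<in>D. \<exists>c\<in>D. a \<subseteq> c \<and> b \<subseteq> c)"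

text \<open>Scott-open subsets of a family L of sets ordered by inclusion, where directed
  joins are unions (as in a frame of opens, which is closed under unions).\<close>
definition scott_open :: "'a set set \<Rightarrow> 'a set set \<Rightarrow> bool" where
  "scott_open L V \<longleftrightarrow> V \<subseteq> L \<and>
     (\<forall>a\<in>V. \<forall>b\<in>L. a \<subseteq> b \<longrightarrow> b \<in> V) \<and>
     (\<forall>D. D \<subseteq> L \<and> directed_set D \<and> \<Union>D \<in> V \<longrightarrow> (\<exists>d\<in>D. d \<in> V))"

lemma scott_open_Int:
  assumes S: "scott_open L S" and T: "scott_open L T"
  shows "scott_open L (S \<inter> T)"
proof -
  have SL: "S \<subseteq> L" and Sup: "\<And>a b. a \<in> S \<Longrightarrow> b \<in> L \<Longrightarrow> a \<subseteq> b \<Longrightarrow> b \<in> S"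
    and Sd: "\<And>D. D \<subseteq> L \<Longrightarrow> directed_set D \<Longrightarrow> \<Union>D \<in> S \<Longrightarrow> \<exists>d\<in>D. d \<in> S"
    using S unfolding scott_open_def by auto
  have Tup: "\<And>a b. a \<in> T \<Longrightarrow> b \<in> L \<Longrightarrow> a \<subseteq> b \<Longrightarrow> b \<in> T"
    and Td: "\<And>D. D \<subseteq> L \<Longrightarrow> directed_set D \<Longrightarrow> \<Union>D \<in> T \<Longrightarrow> \<exists>d\<in>D. d \<in> T"
    using T unfolding scott_open_def by auto
  have "\<exists>d\<in>D. d \<in> S \<inter> T"
    if D: "D \<subseteq> L" "directed_set D" "\<Union>D \<in> S \<inter> T" for D
  proof -
    obtain d1 where d1: "d1 \<in> D" "d1 \<in> S" using Sd[OF D(1,2)] D(3) by auto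
    obtain d2 where d2: "d2 \<in> D" "d2 \<in> T" using Td[OF D(1,2)] D(3) by auto
    obtain c where c: "c \<in> D" "d1 \<subseteq> c" "d2 \<subseteq> c"
      using D(2) d1(1) d2(1) unfolding directed_set_def by blast
    have cL: "c \<in> L" using c(1) D(1) by auto
    have "c \<in> S" using Sup[OF d1(2) cL c(2)] .
    moreover have "c \<in> T" using Tup[OF d2(2) cL c(3)] .
    ultimately show ?thesis using c(1) by auto
  qed
  then show ?thesis unfolding scott_open_def using SL Sup Tup by auto
qed

lemma scott_open_Union:
  assumes K: "\<And>S. S \<in> K \<Longrightarrow> scott_open L S"
  shows "scott_open L (\<Union>K)"
proof -
  have "\<Union>K \<subseteq> L" using K unfolding scott_open_def by blast
  moreover have "b \<in> \<Union>K" if ab: "a \<in> \<Union>K" "b \<in> L" "a \<subseteq> b" for a b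
  proof -
    obtain S where S: "S \<in> K" "a \<in> S" using ab(1) by auto
    then have "b \<in> S" using K[OF S(1)] ab(2,3) unfolding scott_open_def by auto
    then show ?thesis using S(1) by auto
  qed
  moreover have "\<exists>d\<in>D. d \<in> \<Union>K" if D: "D \<subseteq> L" "directed_set D" "\<Union>D \<in> \<Union>K" for D
  proof -
    obtain S where S: "S \<in> K" "\<Union>D \<in> S" using D(3) by auto
    then obtain d where "d \<in> D" "d \<in> S" using K[OF S(1)] D(1,2) unfolding scott_open_def by auto
    then show ?thesis using S(1) by auto
  qed
  ultimately show ?thesis unfolding scott_open_def by auto
qed

lemma istopology_scott: "istopology (scott_open L)"
  unfolding istopology_def using scott_open_Int scott_open_Union by metis

definition scott_topology :: "'a set set \<Rightarrow> 'a set topology" where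
  "scott_topology L = topology (scott_open L)"

text \<open>Since maps are
  represented by HOL functions, equality of maps means equality on the
  underlying point sets.  The space A ranges over all spaces of the type 'a.\<close>
definition is_sierpinski_exponential ::
  "'e topology \<Rightarrow> 'x topology \<Rightarrow> ('e \<times> 'x \<Rightarrow> bool) \<Rightarrow> 'a itself \<Rightarrow> bool" where
  "is_sierpinski_exponential E X ev (_::'a itself) \<longleftrightarrow>
     continuous_map (prod_topology E X) sierpinski_space ev \<and>
     (\<forall>(A::'a topology) h. continuous_map (prod_topology A X) sierpinski_space h \<longrightarrow>
        (\<exists>h'. continuous_map A E h' \<and>
              (\<forall>a\<in>topspace A. \<forall>x\<in>topspace X. h (a, x) = ev (h' a, x)) \<and>
              (\<forall>h''. continuous_map A E h'' \<and>
                     (\<forall>a\<in>topspace A. \<forall>x\<in>topspace X. h (a, x) = ev (h'' a, x)) \<longrightarrow>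
                     (\<forall>a\<in>topspace A. h'' a = h' a))))"

end

theory Submission
  imports Defs
begin

(* Transposing is never the problem: for every space X the slice map
   a \<mapsto> {x. h (a, x)} of a continuous h : A \<times> X \<rightarrow> \<Sigma> is continuous for the Scott
   topology on OX, and it is the only candidate. What needs the hypothesis is
   continuity of evaluation. Upstairs, {(m, x). x \<in> q m} is open in
   Scott(O(\<Sigma>^G)) \<times> X: every m is a union of principal opens, which are Scott-compact,
   and q preserves joins. The quotient map q \<times> id pushes this open set down to
   {(U, x). x \<in> U}. *)

lemma openin_scott_topology: "openin (scott_topology L) = scott_open L"
  unfolding scott_topology_def by (rule topology_inverse'[OF istopology_scott])

lemma topspace_scott_topology: "topspace (scott_topology L) = L"
proof -
  have "scott_open L L"
    unfolding scott_open_def directed_set_def by (simp add: subset_eq) blast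
  moreover have "V \<subseteq> L" if "scott_open L V" for V
    using that unfolding scott_open_def by blast
  ultimately show ?thesis
    unfolding topspace_def openin_scott_topology by blast
qed

lemma openin_sierpinski_space: "openin sierpinski_space U \<longleftrightarrow> U \<in> {{}, {True}, UNIV}"
  unfolding sierpinski_space_def using istopology_sierpinski by simp

lemma topspace_sierpinski_space [simp]: "topspace sierpinski_space = UNIV"
  unfolding topspace_def openin_sierpinski_space by auto

lemma continuous_map_sierpinski_space_iff:
  "continuous_map X sierpinski_space f \<longleftrightarrow> openin X {x \<in> topspace X. f x}"
proof
  assume "continuous_map X sierpinski_space f"
  then have "openin X {x \<in> topspace X. f x \<in> {True}}"
    unfolding continuous_map_def openin_sierpinski_space by blast
  then show "openin X {x \<in> topspace X. f x}"
    by simp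
next
  assume open_true: "openin X {x \<in> topspace X. f x}"
  have "openin X {x \<in> topspace X. f x \<in> U}" if "U \<in> {{}, {True}, UNIV}" for U
  proof -
    from that have "U = {} \<or> U = {True} \<or> U = UNIV"
      by simp
    then show ?thesis
      by (elim disjE) (use open_true in simp_all)
  qed
  then show "continuous_map X sierpinski_space f"
    unfolding continuous_map_def openin_sierpinski_space by simp
qed

lemma scott_open_finite_subunion:
  assumes S: "scott_open L S" and Union_in: "\<Union>\<K> \<in> S"
    and finite_Unions: "\<And>K. K \<subseteq> \<K> \<Longrightarrow> finite K \<Longrightarrow> \<Union>K \<in> L"
  shows "\<exists>K\<subseteq>\<K>. finite K \<and> \<Union>K \<in> S"
proof -
  define D where "D = Union ` {K. K \<subseteq> \<K> \<and> finite K}"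
  have "D \<subseteq> L"
    unfolding D_def using finite_Unions by blast
  moreover have "directed_set D"
    unfolding directed_set_def
  proof (intro conjI ballI)
    have "\<Union>{} \<in> D"
      unfolding D_def by (rule imageI) simp
    then show "D \<noteq> {}"
      by blast
  next
    fix a b assume "a \<in> D" "b \<in> D"
    then obtain K1 K2 where K: "a = \<Union>K1" "b = \<Union>K2" "K1 \<subseteq> \<K>" "K2 \<subseteq> \<K>" "finite K1" "finite K2"
      unfolding D_def by blast
    then have "\<Union>(K1 \<union> K2) \<in> D"
      unfolding D_def by (intro imageI) simp
    moreover have "a \<subseteq> \<Union>(K1 \<union> K2)" "b \<subseteq> \<Union>(K1 \<union> K2)"
      using K(1,2) by auto
    ultimately show "\<exists>c\<in>D. a \<subseteq> c \<and> b \<subseteq> c"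
      by blast
  qed
  moreover have "\<Union>D = \<Union>\<K>"
  proof
    show "\<Union>D \<subseteq> \<Union>\<K>"
      unfolding D_def by blast
    have "B \<in> D" if "B \<in> \<K>" for B
      using imageI[of "{B}" "{K. K \<subseteq> \<K> \<and> finite K}" Union] that unfolding D_def by simp
    then show "\<Union>\<K> \<subseteq> \<Union>D"
      by blast
  qed
  ultimately obtain d where "d \<in> D" "d \<in> S"
    using S Union_in unfolding scott_open_def by (metis (no_types, lifting))
  then show ?thesis
    unfolding D_def by blast
qed

text \<open>A union of families whose members each persist on a neighbourhood varies
  Scott-continuously: a Scott-open set containing the union already contains a finite
  subunion, and finitely many neighbourhoods intersect to a neighbourhood.\<close>
lemma continuous_map_scott_topology_Union:
  assumes Unions: "\<And>K. K \<subseteq> L \<Longrightarrow> \<Union>K \<in> L"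
    and family: "\<And>a. a \<in> topspace A \<Longrightarrow> \<K> a \<subseteq> L"
    and persist: "\<And>a B. a \<in> topspace A \<Longrightarrow> B \<in> \<K> a \<Longrightarrow> eventually (\<lambda>a'. B \<in> \<K> a') (nhdsin A a)"
  shows "continuous_map A (scott_topology L) (\<lambda>a. \<Union>(\<K> a))"
  unfolding continuous_map_def topspace_scott_topology openin_scott_topology
proof (intro conjI allI impI)
  show "(\<lambda>a. \<Union>(\<K> a)) \<in> topspace A \<rightarrow> L"
    by (intro Pi_I Unions family)
next
  fix S assume S: "scott_open L S"
  then have S_up: "\<And>b c. b \<in> S \<Longrightarrow> c \<in> L \<Longrightarrow> b \<subseteq> c \<Longrightarrow> c \<in> S"
    unfolding scott_open_def by blast
  show "openin A {a \<in> topspace A. \<Union>(\<K> a) \<in> S}"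
  proof (subst openin_subopen, intro ballI)
    fix a assume "a \<in> {a \<in> topspace A. \<Union>(\<K> a) \<in> S}"
    then have a: "a \<in> topspace A" "\<Union>(\<K> a) \<in> S"
      by simp_all
    have "\<Union>K \<in> L" if "K \<subseteq> \<K> a" for K
      using that family[OF a(1)] by (intro Unions) (rule subset_trans)
    then obtain K where K: "K \<subseteq> \<K> a" "finite K" "\<Union>K \<in> S"
      using scott_open_finite_subunion[OF S a(2)] by blast
    have "eventually (\<lambda>a'. \<forall>B\<in>K. B \<in> \<K> a') (nhdsin A a)"
      using K(2) by (rule eventually_ball_finite) (use K(1) persist[OF a(1)] in blast)
    then obtain N where N: "openin A N" "a \<in> N" "\<And>a'. a' \<in> N \<Longrightarrow> K \<subseteq> \<K> a'"
      using a(1) unfolding eventually_nhdsin by blast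
    have "N \<subseteq> {a \<in> topspace A. \<Union>(\<K> a) \<in> S}"
    proof
      fix a' assume "a' \<in> N"
      then have a': "a' \<in> topspace A" "K \<subseteq> \<K> a'"
        using openin_subset[OF N(1)] N(3) by auto
      have "\<Union>(\<K> a') \<in> S"
        using S_up[OF K(3) Unions[OF family[OF a'(1)]] Union_mono[OF a'(2)]] .
      then show "a' \<in> {a \<in> topspace A. \<Union>(\<K> a) \<in> S}"
        using a'(1) by simp
    qed
    then show "\<exists>T. openin A T \<and> a \<in> T \<and> T \<subseteq> {a \<in> topspace A. \<Union>(\<K> a) \<in> S}"
      using N(1,2) by blast
  qed
qed

lemma continuous_map_scott_transpose:
  assumes h: "continuous_map (prod_topology A X) sierpinski_space h"
  shows "continuous_map A (scott_topology (opens X)) (\<lambda>a. {x \<in> topspace X. h (a, x)})"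
proof -
  define H where "H = {z \<in> topspace (prod_topology A X). h z}"
  have H_open: "openin (prod_topology A X) H"
    using h unfolding H_def continuous_map_sierpinski_space_iff .
  define \<K> where "\<K> a = {V \<in> opens X. \<exists>N. openin A N \<and> a \<in> N \<and> N \<times> V \<subseteq> H}" for a
  have "continuous_map A (scott_topology (opens X)) (\<lambda>a. \<Union>(\<K> a))"
  proof (rule continuous_map_scott_topology_Union)
    show "\<Union>K \<in> opens X" if "K \<subseteq> opens X" for K
      using that unfolding opens_def by auto
    show "\<K> a \<subseteq> opens X" for a
      unfolding \<K>_def by (rule Collect_subset)
    show "eventually (\<lambda>a'. V \<in> \<K> a') (nhdsin A a)" if "V \<in> \<K> a" for a V
    proof -
      from that have V: "V \<in> opens X" and "\<exists>N. openin A N \<and> a \<in> N \<and> N \<times> V \<subseteq> H"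
        unfolding \<K>_def by simp_all
      then obtain N where N: "openin A N" "a \<in> N" "N \<times> V \<subseteq> H"
        by meson
      have "V \<in> \<K> a'" if "a' \<in> N" for a'
        using V N(1,3) that unfolding \<K>_def by auto
      then show ?thesis
        unfolding eventually_nhdsin using N(1,2) by blast
    qed
  qed
  moreover have "\<Union>(\<K> a) = {x \<in> topspace X. h (a, x)}" if a: "a \<in> topspace A" for a
  proof
    show "\<Union>(\<K> a) \<subseteq> {x \<in> topspace X. h (a, x)}"
    proof
      fix x assume "x \<in> \<Union>(\<K> a)"
      then obtain V N where "x \<in> V" "a \<in> N" "N \<times> V \<subseteq> H"
        unfolding \<K>_def by auto
      then have "(a, x) \<in> H"
        by auto
      then show "x \<in> {x \<in> topspace X. h (a, x)}"
        unfolding H_def by auto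
    qed
    show "{x \<in> topspace X. h (a, x)} \<subseteq> \<Union>(\<K> a)"
    proof
      fix x assume "x \<in> {x \<in> topspace X. h (a, x)}"
      then have "(a, x) \<in> H"
        using a unfolding H_def by simp
      then obtain N V where N: "openin A N" "a \<in> N" and V: "openin X V" "x \<in> V"
        and box: "N \<times> V \<subseteq> H"
        using H_open[unfolded openin_prod_topology_alt, rule_format] by meson
      have "V \<in> \<K> a"
        using N V(1) box unfolding \<K>_def opens_def by auto
      then show "x \<in> \<Union>(\<K> a)"
        using V(2) by (rule UnionI)
    qed
  qed
  ultimately show ?thesis
    by (rule continuous_map_eq)
qed

abbreviation sierpinski_cube :: "'g set \<Rightarrow> ('g \<Rightarrow> bool) topology" where
  "sierpinski_cube G \<equiv> product_topology (\<lambda>_. sierpinski_space) G"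

definition principal_open :: "'g set \<Rightarrow> 'g set \<Rightarrow> ('g \<Rightarrow> bool) set" where
  "principal_open G F = {f \<in> topspace (sierpinski_cube G). \<forall>g\<in>F. f g}"

lemma principal_open_antimono: "F \<subseteq> F' \<Longrightarrow> principal_open G F' \<subseteq> principal_open G F"
  unfolding principal_open_def by auto

lemma openin_principal_open:
  assumes "finite F" "F \<subseteq> G"
  shows "openin (sierpinski_cube G) (principal_open G F)"
  using assms
proof (induction F rule: finite_induct)
  case empty
  show ?case
    using openin_topspace[of "sierpinski_cube G"] unfolding principal_open_def by simp
next
  case (insert g F)
  have "openin (sierpinski_cube G) {f \<in> topspace (sierpinski_cube G). f g}"
    using continuous_map_product_projection[of g G "\<lambda>_. sierpinski_space"] insert.prems
    unfolding continuous_map_sierpinski_space_iff by simp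
  moreover have "principal_open G (insert g F)
      = principal_open G F \<inter> {f \<in> topspace (sierpinski_cube G). f g}"
    unfolding principal_open_def by auto
  ultimately show ?case
    using insert by auto
qed

lemma principal_open_neighbourhood:
  assumes "openin (sierpinski_cube G) U" "f \<in> U"
  obtains F where "finite F" "F \<subseteq> G" "f \<in> principal_open G F" "principal_open G F \<subseteq> U"
proof -
  obtain W where W: "finite {g \<in> G. W g \<noteq> UNIV}" "\<And>g. g \<in> G \<Longrightarrow> openin sierpinski_space (W g)"
    "f \<in> Pi\<^sub>E G W" "Pi\<^sub>E G W \<subseteq> U"
    using assms unfolding openin_product_topology_alt by auto
  define F where "F = {g \<in> G. W g \<noteq> UNIV}"
  have W_F: "W g = {True}" if "g \<in> F" for g
  proof -
    have "g \<in> G" "W g \<noteq> UNIV" "f g \<in> W g"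
      using that W(3) unfolding F_def by auto
    moreover from \<open>g \<in> G\<close> have "W g = {} \<or> W g = {True} \<or> W g = UNIV"
      using W(2) unfolding openin_sierpinski_space by simp
    ultimately show ?thesis
      by (elim disjE) simp_all
  qed
  have "f \<in> topspace (sierpinski_cube G)"
    using W(3) by (simp add: PiE_iff)
  moreover have "f g" if "g \<in> F" for g
  proof -
    have "f g \<in> W g"
      using W(3) that unfolding F_def by (simp add: PiE_iff)
    then show ?thesis
      using W_F[OF that] by simp
  qed
  ultimately have "f \<in> principal_open G F"
    unfolding principal_open_def by blast
  moreover have "principal_open G F \<subseteq> Pi\<^sub>E G W"
  proof
    fix f' assume f': "f' \<in> principal_open G F"
    have "f' g \<in> W g" if "g \<in> G" for g
    proof (cases "g \<in> F")
      case True
      then show ?thesis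
        using f' W_F[OF True] unfolding principal_open_def by simp
    next
      case False
      then show ?thesis
        using that unfolding F_def by simp
    qed
    moreover have "f' \<in> extensional G"
      using f' unfolding principal_open_def by (simp add: PiE_iff)
    ultimately show "f' \<in> Pi\<^sub>E G W"
      by (simp add: PiE_iff)
  qed
  moreover have "finite F" "F \<subseteq> G"
    using W(1) unfolding F_def by auto
  ultimately show ?thesis
    using that W(4) by blast
qed

text \<open>Open sets of the Sierpinski cube are upward closed, and the characteristic
  function of F is the least element of the principal open set of F.\<close>
lemma principal_open_subset_openin:
  assumes U: "openin (sierpinski_cube G) U" and "F \<subseteq> G" and "restrict (\<lambda>g. g \<in> F) G \<in> U"
  shows "principal_open G F \<subseteq> U"
proof -
  obtain F' where F': "finite F'" "F' \<subseteq> G" "restrict (\<lambda>g. g \<in> F) G \<in> principal_open G F'"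
    "principal_open G F' \<subseteq> U"
    by (rule principal_open_neighbourhood[OF U assms(3)])
  have "F' \<subseteq> F"
  proof
    fix g assume "g \<in> F'"
    then have "g \<in> G" "restrict (\<lambda>g. g \<in> F) G g"
      using F'(2,3) unfolding principal_open_def by auto
    then show "g \<in> F"
      by simp
  qed
  show ?thesis
    using principal_open_antimono[OF \<open>F' \<subseteq> F\<close>] F'(4) by (rule subset_trans)
qed

lemma openin_eq_Union_principal_open:
  assumes "openin (sierpinski_cube G) U"
  shows "U = \<Union>{principal_open G F | F. finite F \<and> F \<subseteq> G \<and> principal_open G F \<subseteq> U}"
proof
  show "U \<subseteq> \<Union>{principal_open G F | F. finite F \<and> F \<subseteq> G \<and> principal_open G F \<subseteq> U}"
  proof
    fix f assume "f \<in> U"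
    then obtain F where "finite F" "F \<subseteq> G" "f \<in> principal_open G F" "principal_open G F \<subseteq> U"
      by (rule principal_open_neighbourhood[OF assms])
    then show "f \<in> \<Union>{principal_open G F | F. finite F \<and> F \<subseteq> G \<and> principal_open G F \<subseteq> U}"
      by blast
  qed
qed blast

lemma scott_open_principal_open_upset:
  assumes "F \<subseteq> G"
  shows "scott_open (free_frame G) {U \<in> free_frame G. principal_open G F \<subseteq> U}"
  unfolding scott_open_def
proof (intro conjI ballI allI impI)
  fix D
  assume D: "D \<subseteq> free_frame G \<and> directed_set D \<and> \<Union>D \<in> {U \<in> free_frame G. principal_open G F \<subseteq> U}"
  have "restrict (\<lambda>g. g \<in> F) G \<in> principal_open G F"
    using assms unfolding principal_open_def by auto
  then obtain d where d: "d \<in> D" "restrict (\<lambda>g. g \<in> F) G \<in> d"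
    using D by blast
  then have "openin (sierpinski_cube G) d"
    using D unfolding free_frame_def opens_def by blast
  then have "principal_open G F \<subseteq> d"
    using assms d(2) by (rule principal_open_subset_openin)
  then show "\<exists>d\<in>D. d \<in> {U \<in> free_frame G. principal_open G F \<subseteq> U}"
    using d(1) D by blast
qed auto

lemma frame_hom_openin:
  assumes "frame_hom Y X q" "openin Y U"
  shows "openin X (q U)"
proof -
  have "\<forall>U\<in>opens Y. q U \<in> opens X"
    using assms(1) unfolding frame_hom_def by (elim conjE)
  then show ?thesis
    using assms(2) unfolding opens_def by simp
qed

lemma frame_hom_Union:
  assumes "frame_hom Y X q" "\<And>U. U \<in> \<U> \<Longrightarrow> openin Y U"
  shows "q (\<Union>\<U>) = \<Union>(q ` \<U>)"
proof -
  have "\<forall>\<U>. \<U> \<subseteq> opens Y \<longrightarrow> q (\<Union>\<U>) = \<Union>(q ` \<U>)"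
    using assms(1) unfolding frame_hom_def by (elim conjE)
  moreover have "\<U> \<subseteq> opens Y"
    using assms(2) unfolding opens_def by blast
  ultimately show ?thesis
    by blast
qed

lemma frame_hom_mono:
  assumes q: "frame_hom Y X q" and "openin Y U" "openin Y V" "U \<subseteq> V"
  shows "q U \<subseteq> q V"
proof -
  have "q V = q (\<Union>{U, V})"
    using \<open>U \<subseteq> V\<close> by (simp add: sup.absorb2)
  also have "\<dots> = q U \<union> q V"
    using frame_hom_Union[OF q, of "{U, V}"] assms(2,3) by auto
  finally show ?thesis
    by blast
qed

lemma frame_hom_principal_open_cover:
  assumes q: "frame_hom (sierpinski_cube G) X q"
    and U: "openin (sierpinski_cube G) U" and "x \<in> q U"
  obtains F where "finite F" "F \<subseteq> G" "principal_open G F \<subseteq> U" "x \<in> q (principal_open G F)"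
proof -
  define \<U> where "\<U> = {principal_open G F | F. finite F \<and> F \<subseteq> G \<and> principal_open G F \<subseteq> U}"
  have "U = \<Union>\<U>"
    unfolding \<U>_def using U by (rule openin_eq_Union_principal_open)
  moreover have "q (\<Union>\<U>) = \<Union>(q ` \<U>)"
  proof (rule frame_hom_Union[OF q])
    fix V assume "V \<in> \<U>"
    then obtain F where "finite F" "F \<subseteq> G" "V = principal_open G F"
      unfolding \<U>_def by blast
    then show "openin (sierpinski_cube G) V"
      using openin_principal_open by simp
  qed
  ultimately have "x \<in> \<Union>(q ` \<U>)"
    using \<open>x \<in> q U\<close> by simp
  then obtain V where V: "V \<in> \<U>" "x \<in> q V"
    by blast
  then obtain F where "finite F" "F \<subseteq> G" "V = principal_open G F" "principal_open G F \<subseteq> U"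
    unfolding \<U>_def by blast
  then show ?thesis
    using that V(2) by blast
qed

text \<open>At (U, x) the witnessing box is the upset of a principal open P below U with
  x in q P; this upset is Scott-open since P has a least point.\<close>
lemma openin_frame_hom_membership:
  assumes q: "frame_hom (sierpinski_cube G) X q"
  shows "openin (prod_topology (scott_topology (free_frame G)) X)
           {(U, x). U \<in> free_frame G \<and> x \<in> q U}"
  unfolding openin_prod_topology_alt
proof (intro allI impI)
  fix U x assume "(U, x) \<in> {(U, x). U \<in> free_frame G \<and> x \<in> q U}"
  then have U: "openin (sierpinski_cube G) U" and "x \<in> q U"
    unfolding free_frame_def opens_def by auto
  then obtain F where F: "finite F" "F \<subseteq> G" "principal_open G F \<subseteq> U"
    "x \<in> q (principal_open G F)"
    by (rule frame_hom_principal_open_cover[OF q])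
  define P where "P = principal_open G F"
  have P: "openin (sierpinski_cube G) P"
    unfolding P_def using F(1,2) by (rule openin_principal_open)
  have "{U' \<in> free_frame G. P \<subseteq> U'} \<times> q P \<subseteq> {(U, x). U \<in> free_frame G \<and> x \<in> q U}"
  proof
    fix z assume "z \<in> {U' \<in> free_frame G. P \<subseteq> U'} \<times> q P"
    then obtain U' x' where z: "z = (U', x')" "U' \<in> free_frame G" "P \<subseteq> U'" "x' \<in> q P"
      by blast
    then have "q P \<subseteq> q U'"
      using frame_hom_mono[OF q P] unfolding free_frame_def opens_def by auto
    then show "z \<in> {(U, x). U \<in> free_frame G \<and> x \<in> q U}"
      using z by auto
  qed
  moreover have "openin (scott_topology (free_frame G)) {U' \<in> free_frame G. P \<subseteq> U'}"
    unfolding openin_scott_topology P_def using F(2) by (rule scott_open_principal_open_upset)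
  moreover have "openin X (q P)"
    using q P by (rule frame_hom_openin)
  moreover have "U \<in> {U' \<in> free_frame G. P \<subseteq> U'}"
    using U F(3) unfolding P_def free_frame_def opens_def by auto
  ultimately show "\<exists>V W. openin (scott_topology (free_frame G)) V \<and> openin X W \<and> U \<in> V \<and> x \<in> W \<and>
                         V \<times> W \<subseteq> {(U, x). U \<in> free_frame G \<and> x \<in> q U}"
    using F(4) unfolding P_def by blast
qed

lemma continuous_map_scott_evaluation:
  assumes q: "frame_hom (sierpinski_cube G) X q"
    and quot: "quotient_map
                 (prod_topology (scott_topology (free_frame G)) X)
                 (prod_topology (scott_topology (opens X)) X)
                 (\<lambda>(U, x). (q U, x))"
  shows "continuous_map (prod_topology (scott_topology (opens X)) X) sierpinski_space
           (\<lambda>(V, x). x \<in> V)"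
proof -
  let ?E = "prod_topology (scott_topology (opens X)) X"
  let ?Q = "prod_topology (scott_topology (free_frame G)) X"
  define P where "P = {z \<in> topspace ?E. case z of (V, x) \<Rightarrow> x \<in> V}"
  have "openin X (q U)" if "U \<in> free_frame G" for U
    using q that unfolding free_frame_def opens_def by (simp add: frame_hom_openin)
  then have "q U \<in> opens X" "q U \<subseteq> topspace X" if "U \<in> free_frame G" for U
    using that openin_subset unfolding opens_def by auto
  then have "{z \<in> topspace ?Q. (\<lambda>(U, x). (q U, x)) z \<in> P} = {(U, x). U \<in> free_frame G \<and> x \<in> q U}"
    unfolding P_def by (auto simp: topspace_scott_topology)
  then have "openin ?Q {z \<in> topspace ?Q. (\<lambda>(U, x). (q U, x)) z \<in> P}"
    using openin_frame_hom_membership[OF q] by simp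
  moreover have "P \<subseteq> topspace ?E"
    unfolding P_def by (rule Collect_subset)
  ultimately have "openin ?E P"
    using quot unfolding quotient_map_def by blast
  then show ?thesis
    unfolding continuous_map_sierpinski_space_iff P_def .
qed

lemma continuous_map_scott_transpose_unique:
  assumes "continuous_map A (scott_topology (opens X)) k"
    and "\<forall>a\<in>topspace A. \<forall>x\<in>topspace X. h (a, x) = (x \<in> k a)" and "a \<in> topspace A"
  shows "k a = {x \<in> topspace X. h (a, x)}"
proof -
  have "openin X (k a)"
    using assms(1,3) unfolding continuous_map_def topspace_scott_topology opens_def by blast
  then show ?thesis
    using assms(2,3) openin_subset by fastforce
qed

theorem mainTheorem5:
  fixes X :: "'x topology" and G :: "'g set"
    and R :: "(('g \<Rightarrow> bool) set \<times> ('g \<Rightarrow> bool) set) set"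
    and q :: "('g \<Rightarrow> bool) set \<Rightarrow> 'x set"
  assumes pres: "is_presentation X G R q"
    and quot: "quotient_map
                 (prod_topology (scott_topology (free_frame G)) X)
                 (prod_topology (scott_topology (opens X)) X)
                 (\<lambda>(m, x). (q m, x))"
  shows "is_sierpinski_exponential (scott_topology (opens X)) X
           (\<lambda>(U, x). x \<in> U) TYPE('a)"
  unfolding is_sierpinski_exponential_def
proof (intro conjI allI impI)
  have q: "frame_hom (sierpinski_cube G) X q"
    using pres unfolding is_presentation_def Let_def by blast
  show "continuous_map (prod_topology (scott_topology (opens X)) X) sierpinski_space (\<lambda>(U, x). x \<in> U)"
    using continuous_map_scott_evaluation[OF q] quot by simp
next
  fix A :: "'a topology" and h
  assume "continuous_map (prod_topology A X) sierpinski_space h"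
  then have "continuous_map A (scott_topology (opens X)) (\<lambda>a. {x \<in> topspace X. h (a, x)})"
    by (rule continuous_map_scott_transpose)
  moreover have "\<forall>a\<in>topspace A. \<forall>x\<in>topspace X.
      h (a, x) = (\<lambda>(U, x). x \<in> U) ({x \<in> topspace X. h (a, x)}, x)"
    by simp
  moreover have "h'' a = {x \<in> topspace X. h (a, x)}"
    if "continuous_map A (scott_topology (opens X)) h''"
      and "\<forall>a\<in>topspace A. \<forall>x\<in>topspace X. h (a, x) = (\<lambda>(U, x). x \<in> U) (h'' a, x)"
      and "a \<in> topspace A" for h'' a
    using that(2) by (intro continuous_map_scott_transpose_unique[OF that(1) _ that(3)]) simp
  ultimately show "\<exists>h'. continuous_map A (scott_topology (opens X)) h' \<and>
              (\<forall>a\<in>topspace A. \<forall>x\<in>topspace X. h (a, x) = (\<lambda>(U, x). x \<in> U) (h' a, x)) \<and>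
              (\<forall>h''. continuous_map A (scott_topology (opens X)) h'' \<and>
                     (\<forall>a\<in>topspace A. \<forall>x\<in>topspace X. h (a, x) = (\<lambda>(U, x). x \<in> U) (h'' a, x)) \<longrightarrow>
                     (\<forall>a\<in>topspace A. h'' a = h' a))"
    by (intro exI[of _ "\<lambda>a. {x \<in> topspace X. h (a, x)}"]) blast
qed

end
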